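(* Let $\pi = (X_1, \ldots, X_m)$ be a modular organisation. Then for all $1 \le i \le j \le m$, the sequence $(X_1, \ldots, X_{i-1}, \bigcup_{k=i}^{j} X_k, X_{j+1}, \ldots, X_m)$ is a modular organisation.
   Context: Let $A$ be a finite set of agents. For each $a \in A$ let $S_a$ be a nonempty finite set, and let $S = \prod_{a \in A} S_a$ be the set of states. For each $a \in A$ let $\to_a \subseteq S \times S$ be a relation that is either empty or left-total, such that whenever $s \to_a s'$, either $s = s'$ or $s$ and $s'$ differ only in the $a$-component. For $X \subseteq A$ let $\to_X = \bigcup_{a \in X} \to_a$ (so $\to_\emptyset$ is empty) and $\to_X^*$ its reflexive-transitive closure; for $T \subseteq S$, $(T \to_X) = \{ t' : \exists t \in T,\ t \to_X t'\}$. Orbit operator: $\Omega_X(S') = \{ s' : \exists s \in S',\ s \to_X^* s'\}$. Equilibria operator: $\Psi_X(S') = \{ s \in \Omega_X(S') : \forall s' \in S,\ s \to_X^* s' \implies s' \to_X^* s \}$. $M$-relation: for $X, Y \subseteq A$, $X \leadsto Y$ iff for every $S' \subseteq S$, with $T = \Psi_X(\Psi_{X \cup Y}(S'))$, one has $(T \to_Y) \subseteq T$. A modular organisation is an ordered partition $(X_1, \ldots, X_m)$ of $A$ (a sequence of nonempty pairwise disjoint subsets whose union is $A$) such that for all $1 \le i \le m$, $\left(\bigcup_{j=1}^{i-1} X_j\right) \leadsto X_i$ (the empty union being $\emptyset$). *)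

theory Defs
  imports "HOL-Library.FuncSet"
begin

text \<open>Agents of type 'a; a state is a function from agents to local states ('b),
  restricted to the agent set A (extensional).  R a is the transition relation
  of agent a.\<close>

definition states :: "'a set \<Rightarrow> ('a \<Rightarrow> 'b set) \<Rightarrow> ('a \<Rightarrow> 'b) set" where
  "states A Sa = PiE A Sa"

definition async_system ::
  "'a set \<Rightarrow> ('a \<Rightarrow> 'b set) \<Rightarrow> ('a \<Rightarrow> (('a \<Rightarrow> 'b) \<times> ('a \<Rightarrow> 'b)) set) \<Rightarrow> bool" where
  "async_system A Sa R \<longleftrightarrow>
     finite A \<and>
     (\<forall>a\<in>A. Sa a \<noteq> {} \<and> finite (Sa a)) \<and>
     (\<forall>a\<in>A. R a \<subseteq> states A Sa \<times> states A Sa) \<and>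
     (\<forall>a\<in>A. R a = {} \<or> (\<forall>s\<in>states A Sa. \<exists>s'. (s, s') \<in> R a)) \<and>
     (\<forall>a\<in>A. \<forall>s s'. (s, s') \<in> R a \<longrightarrow> s = s' \<or> (\<forall>b\<in>A. b \<noteq> a \<longrightarrow> s b = s' b))"

definition stepX :: "('a \<Rightarrow> ('s \<times> 's) set) \<Rightarrow> 'a set \<Rightarrow> ('s \<times> 's) set" where
  "stepX R X = (\<Union>a\<in>X. R a)"

definition Orbit :: "('a \<Rightarrow> ('s \<times> 's) set) \<Rightarrow> 'a set \<Rightarrow> 's set \<Rightarrow> 's set" where
  "Orbit R X S' = {s'. \<exists>s\<in>S'. (s, s') \<in> (stepX R X)\<^sup>*}"

definition Equil :: "'s set \<Rightarrow> ('a \<Rightarrow> ('s \<times> 's) set) \<Rightarrow> 'a set \<Rightarrow> 's set \<Rightarrow> 's set" where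
  "Equil S R X S' = {s \<in> Orbit R X S'. \<forall>s'\<in>S. (s, s') \<in> (stepX R X)\<^sup>* \<longrightarrow> (s', s) \<in> (stepX R X)\<^sup>*}"

definition Mrel :: "'s set \<Rightarrow> ('a \<Rightarrow> ('s \<times> 's) set) \<Rightarrow> 'a set \<Rightarrow> 'a set \<Rightarrow> bool" where
  "Mrel S R X Y \<longleftrightarrow>
     (\<forall>S'. S' \<subseteq> S \<longrightarrow>
        (let T = Equil S R X (Equil S R (X \<union> Y) S') in stepX R Y `` T \<subseteq> T))"

text \<open>Ordered partition (X_1,...,X_m) as a list, 0-indexed.\<close>
definition modular_org ::
  "'a set \<Rightarrow> ('s set) \<Rightarrow> ('a \<Rightarrow> ('s \<times> 's) set) \<Rightarrow> 'a set list \<Rightarrow> bool" where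
  "modular_org A S R Xs \<longleftrightarrow>
     (\<forall>i<length Xs. Xs ! i \<noteq> {}) \<and>
     (\<forall>i<length Xs. \<forall>j<length Xs. i \<noteq> j \<longrightarrow> Xs ! i \<inter> Xs ! j = {}) \<and>
     (\<Union>i<length Xs. Xs ! i) = A \<and>
     (\<forall>i<length Xs. Mrel S R (\<Union>j<i. Xs ! j) (Xs ! i))"

end

theory Submission
  imports Defs
begin

text \<open>A state that is recurrent for \<open>X \<union> Y\<close> is already recurrent for \<open>X\<close> when \<open>X \<leadsto> Y\<close>:
  from it, follow \<open>X\<close>-steps to an \<open>X\<close>-recurrent state \<open>q\<close> (which exists by finiteness); the
  set \<open>T\<close> of the \<open>M\<close>-relation contains \<open>q\<close> and is closed under \<open>X\<close>- and \<open>Y\<close>-steps, and the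
  original state is reachable back from \<open>q\<close>, so it lies in \<open>T\<close>.
  Consequently \<open>X \<leadsto> Y\<close> and \<open>X \<union> Y \<leadsto> Z\<close> give \<open>X \<leadsto> Y \<union> Z\<close>, so the condition for a merged
  block \<open>X\<^sub>i \<union> \<dots> \<union> X\<^sub>j\<close> follows from those of \<open>X\<^sub>i, \<dots>, X\<^sub>j\<close> by induction; the conditions of
  the other blocks are unchanged.\<close>

definition recurrent :: "'s set \<Rightarrow> ('a \<Rightarrow> ('s \<times> 's) set) \<Rightarrow> 'a set \<Rightarrow> 's \<Rightarrow> bool" where
  "recurrent S R X s \<longleftrightarrow> (\<forall>s'\<in>S. (s, s') \<in> (stepX R X)\<^sup>* \<longrightarrow> (s', s) \<in> (stepX R X)\<^sup>*)"

lemma Equil_iff: "s \<in> Equil S R X S' \<longleftrightarrow> s \<in> Orbit R X S' \<and> recurrent S R X s"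
  unfolding Equil_def recurrent_def by auto

lemma stepX_Un: "stepX R (X \<union> Y) = stepX R X \<union> stepX R Y"
  unfolding stepX_def by blast

lemma stepX_mono: "X \<subseteq> Y \<Longrightarrow> stepX R X \<subseteq> stepX R Y"
  unfolding stepX_def by blast

lemma Equil_closed:
  assumes "s \<in> Equil S R X S'" and "(s, s') \<in> (stepX R X)\<^sup>*"
  shows "s' \<in> Equil S R X S'"
  using assms unfolding Equil_def Orbit_def by (auto intro: rtrancl_trans)

lemma Equil_Equil_subset:
  assumes "X \<subseteq> Y"
  shows "Equil S R X (Equil S R Y S') \<subseteq> Equil S R Y S'"
proof
  fix t assume "t \<in> Equil S R X (Equil S R Y S')"
  then obtain s where "s \<in> Equil S R Y S'" and "(s, t) \<in> (stepX R X)\<^sup>*"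
    unfolding Equil_def Orbit_def by auto
  moreover have "(stepX R X)\<^sup>* \<subseteq> (stepX R Y)\<^sup>*"
    using assms by (intro rtrancl_mono stepX_mono)
  ultimately show "t \<in> Equil S R Y S'"
    by (auto intro: Equil_closed)
qed

lemma rtrancl_closed_in:
  assumes "(s, t) \<in> r\<^sup>*" and "s \<in> S" and "r \<subseteq> S \<times> S"
  shows "t \<in> S"
  using assms(1) by induction (use assms in auto)

text \<open>A reachable state with the fewest reachable states is recurrent.\<close>

lemma finite_ex_reachable_recurrent:
  assumes fin: "finite S" and closed: "r \<subseteq> S \<times> S" and s: "s \<in> S"
  shows "\<exists>q. (s, q) \<in> r\<^sup>* \<and> q \<in> S \<and> (\<forall>t\<in>S. (q, t) \<in> r\<^sup>* \<longrightarrow> (t, q) \<in> r\<^sup>*)"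
proof -
  define reach where "reach q = {t. (q, t) \<in> r\<^sup>*}" for q
  obtain q where sq: "(s, q) \<in> r\<^sup>*" and least: "\<And>t. (s, t) \<in> r\<^sup>* \<Longrightarrow> card (reach q) \<le> card (reach t)"
    using ex_has_least_nat[of "\<lambda>q. (s, q) \<in> r\<^sup>*" s "\<lambda>q. card (reach q)"] by auto
  have qS: "q \<in> S"
    using rtrancl_closed_in[OF sq s closed] .
  have "(t, q) \<in> r\<^sup>*" if "(q, t) \<in> r\<^sup>*" for t
  proof -
    have "reach t \<subseteq> reach q"
      using that unfolding reach_def by (auto intro: rtrancl_trans)
    moreover have "finite (reach q)"
      using rtrancl_closed_in[OF _ qS closed] fin unfolding reach_def
      by (auto intro: finite_subset)
    moreover have "card (reach q) \<le> card (reach t)"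
      using least sq that by (auto intro: rtrancl_trans)
    ultimately have "reach t = reach q"
      using card_seteq by blast
    then show ?thesis
      unfolding reach_def by auto
  qed
  then show ?thesis
    using sq qS by auto
qed

lemma Mrel_recurrent:
  assumes fin: "finite S" and closed: "stepX R (X \<union> Y) \<subseteq> S \<times> S"
    and M: "Mrel S R X Y" and s: "s \<in> S" and rec: "recurrent S R (X \<union> Y) s"
  shows "recurrent S R X s"
proof -
  have "stepX R X \<subseteq> S \<times> S"
    using closed stepX_mono[of X "X \<union> Y" R] by blast
  then obtain q where sq: "(s, q) \<in> (stepX R X)\<^sup>*" and "q \<in> S" and "recurrent S R X q"
    using finite_ex_reachable_recurrent[OF fin _ s] unfolding recurrent_def by blast
  define T where "T = Equil S R X (Equil S R (X \<union> Y) {s})"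
  have "s \<in> Equil S R (X \<union> Y) {s}"
    using rec unfolding Equil_iff Orbit_def by auto
  then have "q \<in> T"
    unfolding T_def Equil_iff[of q] Orbit_def using sq \<open>recurrent S R X q\<close> by blast
  have T_closed: "t' \<in> T" if "t \<in> T" and "(t, t') \<in> stepX R (X \<union> Y)" for t t'
  proof -
    have "stepX R Y `` T \<subseteq> T"
      using M s unfolding Mrel_def T_def Let_def by auto
    then show ?thesis
      using that Equil_closed[of t S R X] unfolding stepX_Un T_def by blast
  qed
  have "(q, s) \<in> (stepX R (X \<union> Y))\<^sup>*"
    using rec sq \<open>q \<in> S\<close> rtrancl_mono[OF stepX_mono[of X "X \<union> Y" R]]
    unfolding recurrent_def by blast
  then have "s \<in> T"
    by induction (use \<open>q \<in> T\<close> T_closed in auto)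
  then show ?thesis
    unfolding T_def Equil_iff by auto
qed

lemma Mrel_Un:
  assumes fin: "finite S" and closed: "stepX R (X \<union> Y \<union> Z) \<subseteq> S \<times> S"
    and XY: "Mrel S R X Y" and XYZ: "Mrel S R (X \<union> Y) Z"
  shows "Mrel S R X (Y \<union> Z)"
  unfolding Mrel_def Let_def
proof (intro allI impI subsetI)
  fix S' u assume "S' \<subseteq> S"
  define P where "P = Equil S R (X \<union> (Y \<union> Z)) S'"
  assume "u \<in> stepX R (Y \<union> Z) `` Equil S R X P"
  then obtain t where t: "t \<in> Equil S R X P" and tu: "(t, u) \<in> stepX R (Y \<union> Z)"
    unfolding P_def by auto
  have "t \<in> P"
    unfolding P_def by (rule subsetD[OF Equil_Equil_subset[OF Un_upper1] t[unfolded P_def]])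
  have YZ_steps: "stepX R (Y \<union> Z) \<subseteq> stepX R (X \<union> (Y \<union> Z))"
    by (rule stepX_mono) blast
  then have "u \<in> P"
    using Equil_closed[OF \<open>t \<in> P\<close>[unfolded P_def]] tu unfolding P_def by blast
  have "u \<in> S"
    using tu closed YZ_steps by (auto simp: Un_assoc)
  have "recurrent S R (X \<union> Y \<union> Z) u"
    using \<open>u \<in> P\<close> unfolding P_def Equil_iff by (simp add: Un_assoc)
  then have "recurrent S R (X \<union> Y) u"
    using Mrel_recurrent[OF fin closed XYZ \<open>u \<in> S\<close>] by blast
  moreover have "stepX R (X \<union> Y) \<subseteq> S \<times> S"
    using closed stepX_mono[OF Un_upper1[of "X \<union> Y" Z]] by blast
  ultimately have "recurrent S R X u"
    using Mrel_recurrent[OF fin _ XY \<open>u \<in> S\<close>] by blast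
  then show "u \<in> Equil S R X P"
    using \<open>u \<in> P\<close> unfolding Equil_iff Orbit_def by auto
qed

lemma Mrel_interval:
  assumes fin: "finite S" and closed: "stepX R (\<Union>l<length Xs. Xs ! l) \<subseteq> S \<times> S"
    and M: "\<forall>l<length Xs. Mrel S R (\<Union>k<l. Xs ! k) (Xs ! l)"
    and "p < q" and "q \<le> length Xs"
  shows "Mrel S R (\<Union>l<p. Xs ! l) (\<Union>l\<in>{p..<q}. Xs ! l)"
  using assms(4,5)
proof (induction q)
  case 0
  then show ?case by simp
next
  case (Suc q)
  show ?case
  proof (cases "q = p")
    case True
    then show ?thesis
      using M Suc.prems by simp
  next
    case False
    then have IH: "Mrel S R (\<Union>l<p. Xs ! l) (\<Union>l\<in>{p..<q}. Xs ! l)"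
      using Suc by simp
    have "{..<p} \<union> {p..<q} = {..<q}" and "{p..<Suc q} = {p..<q} \<union> {q}"
      using Suc.prems False by auto
    then have prefix: "(\<Union>l<p. Xs ! l) \<union> (\<Union>l\<in>{p..<q}. Xs ! l) = (\<Union>l<q. Xs ! l)"
      and block: "(\<Union>l\<in>{p..<Suc q}. Xs ! l) = (\<Union>l\<in>{p..<q}. Xs ! l) \<union> Xs ! q"
      by (metis UN_Un, auto)
    have "stepX R ((\<Union>l<q. Xs ! l) \<union> Xs ! q) \<subseteq> S \<times> S"
      by (rule order.trans[OF _ closed], rule stepX_mono) (use Suc.prems in fastforce)
    then show ?thesis
      using Mrel_Un[OF fin _ IH] M Suc.prems unfolding prefix block by simp
  qed
qed

definition coarsening :: "(nat \<Rightarrow> nat) \<Rightarrow> nat \<Rightarrow> 'a set list \<Rightarrow> 'a set list" where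
  "coarsening b m Xs = map (\<lambda>k. \<Union>l\<in>{b k..<b (Suc k)}. Xs ! l) [0..<m]"

lemma UN_consecutive_intervals:
  fixes b :: "nat \<Rightarrow> nat"
  assumes "mono b" and "b 0 = 0"
  shows "(\<Union>k<n. {b k..<b (Suc k)}) = {..<b n}"
proof (induction n)
  case 0
  then show ?case using assms(2) by simp
next
  case (Suc n)
  have "b n \<le> b (Suc n)"
    using assms(1) by (simp add: monoD)
  then show ?case
    using Suc ivl_disj_un_one(2) by (simp add: lessThan_Suc Un_commute)
qed

lemma modular_org_coarsening:
  assumes fin: "finite S" and closed: "stepX R A \<subseteq> S \<times> S"
    and org: "modular_org A S R Xs"
    and b: "strict_mono b" "b 0 = 0" "b m = length Xs"
  shows "modular_org A S R (coarsening b m Xs)"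
proof -
  let ?Ys = "coarsening b m Xs"
  have nonempty: "\<And>l. l < length Xs \<Longrightarrow> Xs ! l \<noteq> {}"
    and disjoint: "\<And>l l'. l < length Xs \<Longrightarrow> l' < length Xs \<Longrightarrow> l \<noteq> l' \<Longrightarrow> Xs ! l \<inter> Xs ! l' = {}"
    and cover: "(\<Union>l<length Xs. Xs ! l) = A"
    and M: "\<forall>l<length Xs. Mrel S R (\<Union>k<l. Xs ! k) (Xs ! l)"
    using org unfolding modular_org_def by auto
  have "mono b"
    using b(1) by (rule strict_mono_mono)
  have length_Ys: "length ?Ys = m"
    unfolding coarsening_def by simp
  have nth_Ys: "?Ys ! k = (\<Union>l\<in>{b k..<b (Suc k)}. Xs ! l)" if "k < m" for k
    using that unfolding coarsening_def by simp
  have block_nonempty: "b k < b (Suc k)" for k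
    using b(1) by (simp add: strict_monoD)
  have block_bound: "b (Suc k) \<le> length Xs" if "k < m" for k
    using that b(3) \<open>mono b\<close> by (metis Suc_leI monoD)
  have prefix: "(\<Union>k'<k. ?Ys ! k') = (\<Union>l<b k. Xs ! l)" if "k \<le> m" for k
  proof -
    have "(\<Union>k'<k. ?Ys ! k') = (\<Union>k'<k. \<Union>l\<in>{b k'..<b (Suc k')}. Xs ! l)"
      using that nth_Ys by simp
    also have "\<dots> = (\<Union>l\<in>(\<Union>k'<k. {b k'..<b (Suc k')}). Xs ! l)"
      by blast
    finally show ?thesis
      unfolding UN_consecutive_intervals[OF \<open>mono b\<close> b(2)] .
  qed
  show ?thesis
    unfolding modular_org_def length_Ys
  proof (intro conjI allI impI)
    fix k assume "k < m"
    then have "Xs ! b k \<subseteq> ?Ys ! k"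
      unfolding nth_Ys[OF \<open>k < m\<close>] using block_nonempty[of k] by (intro SUP_upper) auto
    then show "?Ys ! k \<noteq> {}"
      using nonempty[of "b k"] block_nonempty[of k] block_bound[OF \<open>k < m\<close>] by auto
  next
    fix k k' assume "k < m" "k' < m" "k \<noteq> k'"
    have separated: "b (Suc k\<^sub>1) \<le> b k\<^sub>2" if "k\<^sub>1 < k\<^sub>2" for k\<^sub>1 k\<^sub>2
      using that \<open>mono b\<close> by (simp add: monoD)
    have "Xs ! l \<inter> Xs ! l' = {}" if "l \<in> {b k..<b (Suc k)}" "l' \<in> {b k'..<b (Suc k')}" for l l'
    proof (rule disjoint)
      show "l < length Xs" "l' < length Xs"
        using that block_bound[OF \<open>k < m\<close>] block_bound[OF \<open>k' < m\<close>] by auto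
      show "l \<noteq> l'"
        using that separated[of k k'] separated[of k' k] \<open>k \<noteq> k'\<close> by (cases "k < k'") auto
    qed
    then show "?Ys ! k \<inter> ?Ys ! k' = {}"
      unfolding nth_Ys[OF \<open>k < m\<close>] nth_Ys[OF \<open>k' < m\<close>] by blast
  next
    show "(\<Union>k<m. ?Ys ! k) = A"
      using prefix[of m] cover b(3) by simp
  next
    fix k assume "k < m"
    have "stepX R (\<Union>l<length Xs. Xs ! l) \<subseteq> S \<times> S"
      using closed cover by simp
    from Mrel_interval[OF fin this M block_nonempty block_bound[OF \<open>k < m\<close>]]
    show "Mrel S R (\<Union>k'<k. ?Ys ! k') (?Ys ! k)"
      unfolding prefix[OF less_imp_le[OF \<open>k < m\<close>]] nth_Ys[OF \<open>k < m\<close>] .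
  qed
qed

lemma merge_eq_coarsening:
  assumes "i \<le> j" and "j < length Xs"
  shows "take i Xs @ [\<Union>k\<in>{i..j}. Xs ! k] @ drop (Suc j) Xs
           = coarsening (\<lambda>k. if k \<le> i then k else k + (j - i)) (length Xs - (j - i)) Xs"
    (is "?Ys = coarsening ?b ?m Xs")
proof (rule nth_equalityI)
  show "length ?Ys = length (coarsening ?b ?m Xs)"
    using assms unfolding coarsening_def by simp
next
  fix k assume "k < length ?Ys"
  then have k: "k < ?m" using assms by simp
  consider "k < i" | "k = i" | "i < k" by linarith
  then show "?Ys ! k = coarsening ?b ?m Xs ! k"
  proof cases
    case 1
    then show ?thesis
      using assms k unfolding coarsening_def by (simp add: nth_append)
  next
    case 2
    have "{i..<Suc (Suc j - Suc i + i)} = {i..j}"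
      using assms by auto
    then show ?thesis
      using assms k 2 unfolding coarsening_def by (simp add: nth_append)
  next
    case 3
    have "Suc j + (k - Suc i) = k + (j - i)"
      using 3 assms by arith
    then show ?thesis
      using assms k 3 unfolding coarsening_def by (simp add: nth_append)
  qed
qed

theorem proposition3:
  fixes A :: "'a set" and Sa :: "'a \<Rightarrow> 'b set"
    and R :: "'a \<Rightarrow> (('a \<Rightarrow> 'b) \<times> ('a \<Rightarrow> 'b)) set"
    and Xs :: "'a set list" and i j :: nat
  assumes "async_system A Sa R"
    and "modular_org A (states A Sa) R Xs"
    and "i \<le> j" and "j < length Xs"
  shows "modular_org A (states A Sa) R
           (take i Xs @ [\<Union>k\<in>{i..j}. Xs ! k] @ drop (Suc j) Xs)"
proof -
  have "finite (states A Sa)"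
    using assms(1) unfolding states_def async_system_def by (auto intro: finite_PiE)
  moreover have "stepX R A \<subseteq> states A Sa \<times> states A Sa"
    using assms(1) unfolding async_system_def stepX_def by blast
  moreover have "strict_mono (\<lambda>k. if k \<le> i then k else k + (j - i))"
    by (rule strict_monoI) auto
  ultimately show ?thesis
    unfolding merge_eq_coarsening[OF assms(3,4)]
    by (rule modular_org_coarsening[OF _ _ assms(2)]) (use assms(3,4) in auto)
qed

end
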